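(* In the setting of the IPM (with $\nu>0$, $\rho>0$, $f\in H^{-1}(\Omega)^d$, $g_h\in X_{h,\sim}$), the velocity iterates satisfy for every $i\ge2$ $$\|\operatorname{div}u_{h,i}\|_{L^2(\Omega)}\le\|\operatorname{div}u_{h,i-1}\|_{L^2(\Omega)}.$$
   Context: $\Omega\subset\mathbb R^d$, $d\ge2$, bounded polyhedral Lipschitz domain, outer normal $n$; $(\cdot,\cdot)$ $L^2$ inner product; $\langle\cdot,\cdot\rangle$ $H^{-1}$–$H^1_0$ duality; $H^1_\sim(\Omega)=\{v\in H^1(\Omega)^d:\int_{\partial\Omega}\operatorname{tr}(v)\cdot n\,d\sigma=0\}$. Scott–Vogelius setting: shape-regular conforming simplicial triangulation $\mathcal T_h$; $X_h=\mathcal L^1_k(\mathcal T_h)^d$ (continuous piecewise polynomials of degree $\le k$), $X_{h,\sim}=X_h\cap H^1_\sim$, $V_h=X_h\cap H^1_0(\Omega)^d$, with $\operatorname{div}V_h=\operatorname{div}X_{h,\sim}$. IPM: $\varphi_{h,0}=0$; for $i\ge1$, $u_{h,i}\in X_{h,\sim}$ with $\operatorname{tr}(u_{h,i})=\operatorname{tr}(g_h)$ and $\nu(\nabla u_{h,i},\nabla v_h)+\rho(\operatorname{div}u_{h,i},\operatorname{div}v_h)=\langle f,v_h\rangle+(\operatorname{div}\varphi_{h,i-1},\operatorname{div}v_h)$ for all $v_h\in V_h$; then $\varphi_{h,i}=\varphi_{h,i-1}-\rho u_{h,i}$. *)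

theory Defs
  imports "HOL-Analysis.Analysis"
begin

definition lipschitz_domain :: "(real^'d) set \<Rightarrow> bool" where
  "lipschitz_domain \<Omega> \<longleftrightarrow> open \<Omega> \<and> connected \<Omega> \<and> bounded \<Omega> \<and> \<Omega> \<noteq> {} \<and>
     (\<forall>x\<in>frontier \<Omega>. \<exists>(e::real^'d) (r::real) (L::real) (\<gamma>::real^'d \<Rightarrow> real).
        norm e = 1 \<and> r > 0 \<and> L-lipschitz_on {y. y \<bullet> e = 0} \<gamma> \<and>
        \<Omega> \<inter> ball x r = {y \<in> ball x r. (y - x) \<bullet> e < \<gamma> ((y - x) - ((y - x) \<bullet> e) *\<^sub>R e)})"

definition polyhedral_domain :: "(real^'d) set \<Rightarrow> bool" where
  "polyhedral_domain \<Omega> \<longleftrightarrow> (\<exists>P. finite P \<and> (\<forall>p\<in>P. polytope p) \<and> closure \<Omega> = \<Union>P)"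

definition verts :: "(real^'d) set \<Rightarrow> (real^'d) set" where
  "verts S = {x. x extreme_point_of S}"

definition conforming_triangulation :: "(real^'d) set set \<Rightarrow> (real^'d) set \<Rightarrow> bool" where
  "conforming_triangulation T \<Omega> \<longleftrightarrow> finite T \<and> T \<noteq> {} \<and>
     (\<forall>S\<in>T. int CARD('d) simplex S) \<and> \<Union>T = closure \<Omega> \<and>
     (\<forall>S\<in>T. \<forall>S'\<in>T. (S \<inter> S') face_of S \<and> (S \<inter> S') face_of S')"

definition poly_le :: "nat \<Rightarrow> (real^'d \<Rightarrow> real) \<Rightarrow> bool" where
  "poly_le k p \<longleftrightarrow> (\<exists>c :: ('d \<Rightarrow> nat) \<Rightarrow> real. \<forall>x. p x =
     (\<Sum>\<alpha>\<in>{\<alpha>::'d \<Rightarrow> nat. (\<Sum>i\<in>UNIV. \<alpha> i) \<le> k}. c \<alpha> * (\<Prod>i\<in>UNIV. (x $ i) ^ \<alpha> i)))"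

definition Xh :: "(real^'d) set set \<Rightarrow> (real^'d) set \<Rightarrow> nat \<Rightarrow> (real^'d \<Rightarrow> real^'d) set" where
  "Xh T \<Omega> k = {v. continuous_on (closure \<Omega>) v \<and>
     (\<forall>S\<in>T. \<forall>j. \<exists>p. poly_le k p \<and> (\<forall>x\<in>S. v x $ j = p x))}"

text \<open>Partial derivative d_l v_j (classical, exists a.e. for elements of X_h; coincides with
  the weak derivative there).\<close>
definition pd :: "(real^'d \<Rightarrow> real^'d) \<Rightarrow> 'd \<Rightarrow> 'd \<Rightarrow> real^'d \<Rightarrow> real" where
  "pd v l j x = frechet_derivative v (at x) (axis l (1::real)) $ j"

definition divg :: "(real^'d \<Rightarrow> real^'d) \<Rightarrow> real^'d \<Rightarrow> real" where
  "divg v x = (\<Sum>j\<in>UNIV. pd v j j x)"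

definition l2_ip :: "(real^'d) set \<Rightarrow> (real^'d \<Rightarrow> real) \<Rightarrow> (real^'d \<Rightarrow> real) \<Rightarrow> real" where
  "l2_ip \<Omega> a b = (LINT x:\<Omega>|lebesgue. a x * b x)"

definition l2_norm :: "(real^'d) set \<Rightarrow> (real^'d \<Rightarrow> real) \<Rightarrow> real" where
  "l2_norm \<Omega> a = sqrt (LINT x:\<Omega>|lebesgue. (a x)^2)"

definition grad_ip :: "(real^'d) set \<Rightarrow> (real^'d \<Rightarrow> real^'d) \<Rightarrow> (real^'d \<Rightarrow> real^'d) \<Rightarrow> real" where
  "grad_ip \<Omega> u v = (LINT x:\<Omega>|lebesgue. (\<Sum>j\<in>UNIV. \<Sum>l\<in>UNIV. pd u l j x * pd v l j x))"

definition facet :: "(real^'d) set \<Rightarrow> real^'d \<Rightarrow> (real^'d) set" where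
  "facet S p = convex hull (verts S - {p})"

definition outer_normal :: "(real^'d) set \<Rightarrow> real^'d \<Rightarrow> real^'d" where
  "outer_normal S p = (SOME n. norm n = 1 \<and> (\<forall>a\<in>facet S p. \<forall>b\<in>facet S p. (a - b) \<bullet> n = 0)
                              \<and> (\<forall>a\<in>facet S p. (p - a) \<bullet> n < 0))"

text \<open>Surface integral over a flat (d-1)-dimensional piece F with unit normal n:
  integrate phi composed with the orthogonal projection onto the hyperplane of F
  over the unit-height prism F + [0,1] n (Fubini gives exactly the surface integral).\<close>
definition flat_surface_integral :: "(real^'d) set \<Rightarrow> real^'d \<Rightarrow> (real^'d \<Rightarrow> real) \<Rightarrow> real" where
  "flat_surface_integral F n \<phi> =
     (let a = (SOME a. a \<in> F) in
      LINT y:{x + s *\<^sub>R n | x s. x \<in> F \<and> s \<in> {0..1}}|lebesgue. \<phi> (y - ((y - a) \<bullet> n) *\<^sub>R n))"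

definition boundary_facets :: "(real^'d) set set \<Rightarrow> (real^'d) set \<Rightarrow> ((real^'d) set \<times> (real^'d)) set" where
  "boundary_facets T \<Omega> = {(S, p). S \<in> T \<and> p \<in> verts S \<and> facet S p \<subseteq> frontier \<Omega>}"

definition boundary_flux :: "(real^'d) set set \<Rightarrow> (real^'d) set \<Rightarrow> (real^'d \<Rightarrow> real^'d) \<Rightarrow> real" where
  "boundary_flux T \<Omega> v = (\<Sum>(S, p)\<in>boundary_facets T \<Omega>.
      flat_surface_integral (facet S p) (outer_normal S p) (\<lambda>x. v x \<bullet> outer_normal S p))"

text \<open>X_{h,~} = X_h intersected with H^1_~.\<close>
definition Xh_tilde :: "(real^'d) set set \<Rightarrow> (real^'d) set \<Rightarrow> nat \<Rightarrow> (real^'d \<Rightarrow> real^'d) set" where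
  "Xh_tilde T \<Omega> k = {v \<in> Xh T \<Omega> k. boundary_flux T \<Omega> v = 0}"

definition Vh :: "(real^'d) set set \<Rightarrow> (real^'d) set \<Rightarrow> nat \<Rightarrow> (real^'d \<Rightarrow> real^'d) set" where
  "Vh T \<Omega> k = {v \<in> Xh T \<Omega> k. \<forall>x\<in>frontier \<Omega>. v x = 0}"

text \<open>div V_h = div X_{h,~} (as subsets of L^2, i.e. up to null sets).\<close>
definition div_compatible :: "(real^'d) set set \<Rightarrow> (real^'d) set \<Rightarrow> nat \<Rightarrow> bool" where
  "div_compatible T \<Omega> k \<longleftrightarrow>
     (\<forall>w\<in>Xh_tilde T \<Omega> k. \<exists>v\<in>Vh T \<Omega> k. AE x in lebesgue. x \<in> \<Omega> \<longrightarrow> divg v x = divg w x) \<and>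
     (\<forall>v\<in>Vh T \<Omega> k. \<exists>w\<in>Xh_tilde T \<Omega> k. AE x in lebesgue. x \<in> \<Omega> \<longrightarrow> divg w x = divg v x)"

end

theory Submission
  imports Defs
begin

text \<open>
  Both iterates have trace g_h, so e = u_i - u_(i-1) is an admissible test function.
  Subtracting the discrete equations of steps i and i-1, both tested with e (so the load term
  cancels and no property of f is needed), and using phi_(i-1) - phi_(i-2) = -rho u_(i-1) leaves
  nu |grad e|^2 + rho (div u_i, div e) = 0. Hence (a, a - b) <= 0 for a = div u_i,
  b = div u_(i-1), and 2 (a, a - b) = |a|^2 - |b|^2 + |a - b|^2 gives |a| <= |b|.

  The analytic content is the bilinearity of the integrals involved: a function in X_h is C^1 on
  the interior of every simplex, so its partial derivatives are measurable and bounded off the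
  skeleton of the triangulation, a null set.
\<close>

definition continuously_differentiable :: "('a::real_normed_vector \<Rightarrow> real) \<Rightarrow> bool" where
  "continuously_differentiable p \<longleftrightarrow>
     (\<exists>D. (\<forall>x. (p has_derivative D x) (at x)) \<and> (\<forall>h. continuous_on UNIV (\<lambda>x. D x h)))"

lemma continuously_differentiable_const: "continuously_differentiable (\<lambda>x. c)"
  unfolding continuously_differentiable_def by (rule exI[of _ "\<lambda>x h. 0"]) auto

lemma continuously_differentiable_component: "continuously_differentiable (\<lambda>x. x $ i)"
  unfolding continuously_differentiable_def
  by (rule exI[of _ "\<lambda>x h. h $ i"]) (auto intro: bounded_linear_imp_has_derivative)

lemma continuously_differentiable_add:
  assumes "continuously_differentiable p" "continuously_differentiable q"
  shows "continuously_differentiable (\<lambda>x. p x + q x)"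
proof -
  obtain D E where "\<forall>x. (p has_derivative D x) (at x)" "\<forall>h. continuous_on UNIV (\<lambda>x. D x h)"
    "\<forall>x. (q has_derivative E x) (at x)" "\<forall>h. continuous_on UNIV (\<lambda>x. E x h)"
    using assms unfolding continuously_differentiable_def by blast
  then show ?thesis
    unfolding continuously_differentiable_def
    by (intro exI[of _ "\<lambda>x h. D x h + E x h"]) (auto intro!: derivative_eq_intros continuous_intros)
qed

lemma continuously_differentiable_mult:
  assumes "continuously_differentiable p" "continuously_differentiable q"
  shows "continuously_differentiable (\<lambda>x. p x * q x)"
proof -
  obtain D E where D: "\<forall>x. (p has_derivative D x) (at x)" "\<forall>h. continuous_on UNIV (\<lambda>x. D x h)"
    and E: "\<forall>x. (q has_derivative E x) (at x)" "\<forall>h. continuous_on UNIV (\<lambda>x. E x h)"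
    using assms unfolding continuously_differentiable_def by blast
  have "continuous_on UNIV p" "continuous_on UNIV q"
    using D(1) E(1) by (metis continuous_at_imp_continuous_on has_derivative_continuous)+
  with D E show ?thesis
    unfolding continuously_differentiable_def
    by (intro exI[of _ "\<lambda>x h. p x * E x h + D x h * q x"])
      (auto intro!: derivative_eq_intros continuous_intros)
qed

lemma continuously_differentiable_sum:
  "(\<And>a. a \<in> A \<Longrightarrow> continuously_differentiable (f a)) \<Longrightarrow>
    continuously_differentiable (\<lambda>x. \<Sum>a\<in>A. f a x)"
  by (induction A rule: infinite_finite_induct)
    (simp_all add: continuously_differentiable_const continuously_differentiable_add)

lemma continuously_differentiable_prod:
  "(\<And>a. a \<in> A \<Longrightarrow> continuously_differentiable (f a)) \<Longrightarrow>
    continuously_differentiable (\<lambda>x. \<Prod>a\<in>A. f a x)"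
  by (induction A rule: infinite_finite_induct)
    (simp_all add: continuously_differentiable_const continuously_differentiable_mult)

lemma continuously_differentiable_power:
  "continuously_differentiable p \<Longrightarrow> continuously_differentiable (\<lambda>x. p x ^ n)"
  by (induction n) (simp_all add: continuously_differentiable_const continuously_differentiable_mult)

lemma poly_le_continuously_differentiable:
  assumes "poly_le k p"
  shows "continuously_differentiable p"
proof -
  obtain c where "\<forall>x. p x = (\<Sum>\<alpha>\<in>{\<alpha>. sum \<alpha> UNIV \<le> k}. c \<alpha> * (\<Prod>i\<in>UNIV. (x $ i) ^ \<alpha> i))"
    using assms unfolding poly_le_def by blast
  then have "p = (\<lambda>x. \<Sum>\<alpha>\<in>{\<alpha>. sum \<alpha> UNIV \<le> k}. c \<alpha> * (\<Prod>i\<in>UNIV. (x $ i) ^ \<alpha> i))"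
    by auto
  then show ?thesis
    by (simp, intro continuously_differentiable_sum continuously_differentiable_mult
        continuously_differentiable_const continuously_differentiable_prod
        continuously_differentiable_power continuously_differentiable_component)
qed

lemma poly_le_lincomb:
  assumes "poly_le k p" "poly_le k q"
  shows "poly_le k (\<lambda>x. a * p x + b * q x)"
proof -
  obtain c c' where
    "\<forall>x. p x = (\<Sum>\<alpha>\<in>{\<alpha>. sum \<alpha> UNIV \<le> k}. c \<alpha> * (\<Prod>i\<in>UNIV. (x $ i) ^ \<alpha> i))"
    "\<forall>x. q x = (\<Sum>\<alpha>\<in>{\<alpha>. sum \<alpha> UNIV \<le> k}. c' \<alpha> * (\<Prod>i\<in>UNIV. (x $ i) ^ \<alpha> i))"
    using assms unfolding poly_le_def by blast
  then show ?thesis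
    unfolding poly_le_def
    by (intro exI[of _ "\<lambda>\<alpha>. a * c \<alpha> + b * c' \<alpha>"])
      (simp add: sum_distrib_left sum.distrib algebra_simps)
qed

lemma Xh_lincomb:
  assumes "v \<in> Xh T \<Omega> k" "w \<in> Xh T \<Omega> k"
  shows "(\<lambda>x. a *\<^sub>R v x + b *\<^sub>R w x) \<in> Xh T \<Omega> k"
proof -
  have "\<exists>p. poly_le k p \<and> (\<forall>x\<in>S. (a *\<^sub>R v x + b *\<^sub>R w x) $ j = p x)" if "S \<in> T" for S j
  proof -
    obtain p q where "poly_le k p" "\<forall>x\<in>S. v x $ j = p x" "poly_le k q" "\<forall>x\<in>S. w x $ j = q x"
      using assms \<open>S \<in> T\<close> unfolding Xh_def by blast
    then show ?thesis by (intro exI[of _ "\<lambda>x. a * p x + b * q x"]) (simp add: poly_le_lincomb)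
  qed
  moreover have "continuous_on (closure \<Omega>) (\<lambda>x. a *\<^sub>R v x + b *\<^sub>R w x)"
    using assms unfolding Xh_def by (auto intro!: continuous_intros)
  ultimately show ?thesis unfolding Xh_def by blast
qed

lemma Xh_zero: "(\<lambda>x. 0) \<in> Xh T \<Omega> k"
  unfolding Xh_def poly_le_def by (auto intro!: exI[of _ "\<lambda>_. 0"])

lemma Xh_cellwise_C1:
  assumes "v \<in> Xh T \<Omega> k" "S \<in> T"
  shows "\<exists>D. (\<forall>x\<in>interior S. (v has_derivative D x) (at x)) \<and> (\<forall>h. continuous_on UNIV (\<lambda>x. D x h))"
proof -
  have "\<forall>j. \<exists>p. poly_le k p \<and> (\<forall>x\<in>S. v x $ j = p x)"
    using assms unfolding Xh_def by blast
  then obtain P where P: "\<And>j. poly_le k (P j)" "\<And>j x. x \<in> S \<Longrightarrow> v x $ j = P j x"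
    by metis
  have "\<forall>j. \<exists>D. (\<forall>x. (P j has_derivative D x) (at x)) \<and> (\<forall>h. continuous_on UNIV (\<lambda>x. D x h))"
    using P(1) poly_le_continuously_differentiable unfolding continuously_differentiable_def
    by blast
  then obtain D where D: "\<And>j x. (P j has_derivative D j x) (at x)"
    "\<And>j h. continuous_on UNIV (\<lambda>x. D j x h)"
    by metis
  show ?thesis
  proof (intro exI[of _ "\<lambda>x h. \<chi> j. D j x h"] conjI ballI allI)
    show "continuous_on UNIV (\<lambda>x. \<chi> j. D j x h)" for h
      by (intro continuous_on_vec_lambda D(2))
  next
    fix x assume x: "x \<in> interior S"
    have "((\<lambda>y. \<chi> j. P j y) has_derivative (\<lambda>h. \<chi> j. D j x h)) (at x)"
      using D(1) by (subst has_derivative_componentwise_within)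
        (auto simp: Basis_vec_def cart_eq_inner_axis[symmetric])
    then show "(v has_derivative (\<lambda>h. \<chi> j. D j x h)) (at x)"
      by (rule has_derivative_transform_within_open[OF _ open_interior x])
        (use P(2) interior_subset in \<open>force simp: vec_eq_iff\<close>)
  qed
qed

definition skeleton :: "(real^'d) set set \<Rightarrow> (real^'d) set" where
  "skeleton T = (\<Union>S\<in>T. frontier S)"

lemma negligible_skeleton:
  assumes "conforming_triangulation T \<Omega>"
  shows "negligible (skeleton T)"
  using assms unfolding skeleton_def conforming_triangulation_def
  by (intro negligible_Union) (auto intro!: negligible_convex_frontier convex_simplex)

lemma conforming_triangulation_interior_cell:
  assumes "conforming_triangulation T \<Omega>" "x \<in> \<Omega>" "x \<notin> skeleton T"
  shows "\<exists>S\<in>T. x \<in> interior S"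
proof -
  obtain S where S: "S \<in> T" "x \<in> S"
    using assms closure_subset unfolding conforming_triangulation_def by blast
  have "closed S"
    using assms(1) S(1) unfolding conforming_triangulation_def by (meson compact_imp_closed compact_simplex)
  then have "x \<in> interior S" using S assms(3) unfolding skeleton_def frontier_def by auto
  with S show ?thesis by blast
qed

lemma Xh_differentiable_off_skeleton:
  assumes "conforming_triangulation T \<Omega>" "v \<in> Xh T \<Omega> k" "x \<in> \<Omega> - skeleton T"
  shows "v differentiable (at x)"
  using conforming_triangulation_interior_cell[OF assms(1)] Xh_cellwise_C1[OF assms(2)] assms(3)
  unfolding differentiable_def by blast

lemma pd_lincomb:
  assumes "v differentiable (at x)" "w differentiable (at x)"
  shows "pd (\<lambda>y. a *\<^sub>R v y + b *\<^sub>R w y) l j x = a * pd v l j x + b * pd w l j x"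
proof -
  have "((\<lambda>y. a *\<^sub>R v y + b *\<^sub>R w y) has_derivative
      (\<lambda>h. a *\<^sub>R frechet_derivative v (at x) h + b *\<^sub>R frechet_derivative w (at x) h)) (at x)"
    using assms by (intro derivative_intros) (auto simp: frechet_derivative_works[symmetric])
  from frechet_derivative_at[OF this, symmetric] show ?thesis
    unfolding pd_def by simp
qed

lemma divg_lincomb:
  assumes "v differentiable (at x)" "w differentiable (at x)"
  shows "divg (\<lambda>y. a *\<^sub>R v y + b *\<^sub>R w y) x = a * divg v x + b * divg w x"
  unfolding divg_def using pd_lincomb[OF assms] by (simp add: sum.distrib sum_distrib_left)

lemma measurable_on_Un_lebesgue:
  assumes "f measurable_on A" "f measurable_on B" "A \<in> sets lebesgue" "B \<in> sets lebesgue"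
  shows "f measurable_on (A \<union> B)"
proof -
  have fA: "(\<lambda>x. if x \<in> A then f x else 0) measurable_on UNIV"
    and fB: "(\<lambda>x. if x \<in> B then f x else 0) measurable_on UNIV"
    using assms measurable_on_UNIV by blast+
  have "(\<lambda>x. if x \<in> - A then (if x \<in> B then f x else 0) else 0) measurable_on UNIV"
    using assms(3) by (intro measurable_on_restrict[OF fB])
      (metis Compl_eq_Diff_UNIV sets.compl_sets space_borel space_completion space_lborel)
  from measurable_on_add[OF fA this]
  have "(\<lambda>x. if x \<in> A \<union> B then f x else 0) measurable_on UNIV"
    by (rule measurable_on_spike[where S="{}"]) auto
  then show ?thesis using measurable_on_UNIV by blast
qed

lemma measurable_on_Union_lebesgue:
  assumes "finite F" "\<And>A. A \<in> F \<Longrightarrow> f measurable_on A" "\<And>A. A \<in> F \<Longrightarrow> A \<in> sets lebesgue"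
  shows "f measurable_on (\<Union>F)"
  using assms
proof (induction F rule: finite_induct)
  case empty
  then show ?case using measurable_on_UNIV[of "{}" f] measurable_on_0[of UNIV] by simp
next
  case (insert A F)
  have "\<Union>F \<in> sets lebesgue" using insert by (intro sets.finite_Union) auto
  with insert show ?case using measurable_on_Un_lebesgue[of f A "\<Union>F"] by simp
qed

definition bounded_measurable_off ::
    "'a::euclidean_space set \<Rightarrow> 'a set \<Rightarrow> ('a \<Rightarrow> real) \<Rightarrow> bool" where
  "bounded_measurable_off N \<Omega> f \<longleftrightarrow> f measurable_on \<Omega> \<and> (\<exists>B. \<forall>x\<in>\<Omega> - N. \<bar>f x\<bar> \<le> B)"

lemma bounded_measurable_off_add:
  assumes "bounded_measurable_off N \<Omega> f" "bounded_measurable_off N \<Omega> g"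
  shows "bounded_measurable_off N \<Omega> (\<lambda>x. f x + g x)"
proof -
  obtain B C where "\<forall>x\<in>\<Omega> - N. \<bar>f x\<bar> \<le> B" "\<forall>x\<in>\<Omega> - N. \<bar>g x\<bar> \<le> C"
    using assms unfolding bounded_measurable_off_def by blast
  then have "\<forall>x\<in>\<Omega> - N. \<bar>f x + g x\<bar> \<le> B + C" by (smt (verit))
  with assms show ?thesis unfolding bounded_measurable_off_def by (blast intro: measurable_on_add)
qed

lemma bounded_measurable_off_mult:
  assumes "bounded_measurable_off N \<Omega> f" "bounded_measurable_off N \<Omega> g"
  shows "bounded_measurable_off N \<Omega> (\<lambda>x. f x * g x)"
proof -
  obtain B C where "\<forall>x\<in>\<Omega> - N. \<bar>f x\<bar> \<le> B" "\<forall>x\<in>\<Omega> - N. \<bar>g x\<bar> \<le> C"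
    using assms unfolding bounded_measurable_off_def by blast
  then have "\<forall>x\<in>\<Omega> - N. \<bar>f x * g x\<bar> \<le> B * C" by (auto simp: abs_mult intro!: mult_mono)
  moreover have "(\<lambda>x. f x * g x) measurable_on \<Omega>"
    using assms measurable_on_scaleR unfolding bounded_measurable_off_def by fastforce
  ultimately show ?thesis unfolding bounded_measurable_off_def by blast
qed

lemma bounded_measurable_off_sum:
  "finite I \<Longrightarrow> (\<And>i. i \<in> I \<Longrightarrow> bounded_measurable_off N \<Omega> (f i)) \<Longrightarrow>
    bounded_measurable_off N \<Omega> (\<lambda>x. \<Sum>i\<in>I. f i x)"
proof (induction I rule: finite_induct)
  case empty
  then show ?case unfolding bounded_measurable_off_def by (auto intro!: exI[of _ 0])
next
  case (insert a I)
  then show ?case by (simp add: bounded_measurable_off_add)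
qed

lemma set_integrable_bounded_measurable_off:
  assumes "\<Omega> \<in> lmeasurable" "negligible N" "bounded_measurable_off N \<Omega> f"
  shows "set_integrable lebesgue \<Omega> f"
proof -
  obtain B where B: "\<forall>x\<in>\<Omega> - N. \<bar>f x\<bar> \<le> B" and "f measurable_on \<Omega>"
    using assms(3) unfolding bounded_measurable_off_def by blast
  define g where "g x = (if x \<in> N then 0 else f x)" for x
  have \<Omega>: "\<Omega> \<in> sets lebesgue" using assms(1) by (simp add: fmeasurableD)
  have "g measurable_on \<Omega>"
    by (rule measurable_on_spike[OF \<open>f measurable_on \<Omega>\<close> assms(2)]) (simp add: g_def)
  then have "g \<in> borel_measurable (lebesgue_on \<Omega>)"
    using measurable_on_iff_borel_measurable[OF \<Omega>] by blast
  moreover have "norm (g x) \<le> \<bar>B\<bar>" if "x \<in> \<Omega>" for x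
    using B that by (auto simp: g_def intro: order_trans[OF _ abs_ge_self])
  ultimately have "g absolutely_integrable_on \<Omega>"
    using integrable_on_const[OF assms(1)]
    by (intro measurable_bounded_by_integrable_imp_absolutely_integrable[OF _ \<Omega>]) auto
  then show ?thesis by (rule absolutely_integrable_spike[OF _ assms(2)]) (simp add: g_def)
qed

lemma set_lebesgue_integral_lincomb_off_negligible:
  fixes F G H :: "'a::euclidean_space \<Rightarrow> real"
  assumes "negligible N" "set_integrable lebesgue \<Omega> F" "set_integrable lebesgue \<Omega> G"
    and "\<And>x. x \<in> \<Omega> - N \<Longrightarrow> H x = a * F x + b * G x"
  shows "(LINT x:\<Omega>|lebesgue. H x) = a * (LINT x:\<Omega>|lebesgue. F x) + b * (LINT x:\<Omega>|lebesgue. G x)"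
proof -
  have FG: "set_integrable lebesgue \<Omega> (\<lambda>x. a * F x + b * G x)"
    using assms(2,3) by (intro set_integral_add set_integrable_mult_right)
  then have H: "set_integrable lebesgue \<Omega> H"
    using absolutely_integrable_spike[OF _ assms(1)] assms(4) by blast
  have "(LINT x:\<Omega>|lebesgue. H x) = integral \<Omega> H"
    using set_lebesgue_integral_eq_integral(2)[OF H] .
  also have "\<dots> = integral \<Omega> (\<lambda>x. a * F x + b * G x)"
    using assms(4) by (intro integral_spike[OF assms(1)]) auto
  also have "\<dots> = (LINT x:\<Omega>|lebesgue. a * F x + b * G x)"
    using set_lebesgue_integral_eq_integral(2)[OF FG] by simp
  finally show ?thesis using assms(2,3) by (simp add: set_integrable_mult_right)
qed

lemma Xh_pd_cellwise_continuous:
  assumes "v \<in> Xh T \<Omega> k" "S \<in> T"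
  shows "\<exists>c. continuous_on UNIV c \<and> (\<forall>x\<in>interior S. pd v l j x = c x)"
proof -
  obtain D where D: "\<forall>x\<in>interior S. (v has_derivative D x) (at x)" "\<forall>h. continuous_on UNIV (\<lambda>x. D x h)"
    using Xh_cellwise_C1[OF assms] by blast
  show ?thesis
  proof (intro exI[of _ "\<lambda>x. D x (axis l 1) $ j"] conjI ballI)
    show "continuous_on UNIV (\<lambda>x. D x (axis l 1) $ j)"
      using D(2)[rule_format, of "axis l 1"] by (intro continuous_intros)
    show "pd v l j x = D x (axis l 1) $ j" if "x \<in> interior S" for x
      using frechet_derivative_at[OF D(1)[rule_format, OF that]] unfolding pd_def by simp
  qed
qed

lemma Xh_pd_measurable_on:
  assumes tri: "conforming_triangulation T \<Omega>" and \<Omega>: "\<Omega> \<in> sets lebesgue" and v: "v \<in> Xh T \<Omega> k"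
  shows "(\<lambda>x. pd v l j x) measurable_on \<Omega>"
proof -
  define U where "U = (\<lambda>S. \<Omega> \<inter> interior S) ` T"
  have "(\<lambda>x. pd v l j x) measurable_on A" "A \<in> sets lebesgue" if "A \<in> U" for A
  proof -
    obtain S where S: "S \<in> T" "A = \<Omega> \<inter> interior S" using \<open>A \<in> U\<close> unfolding U_def by blast
    have "interior S \<in> sets lebesgue" by (simp add: borel_open sets_completionI_sets)
    with S(2) \<Omega> show A: "A \<in> sets lebesgue" by (simp add: sets.Int)
    obtain c where "continuous_on UNIV c" "\<forall>x\<in>interior S. pd v l j x = c x"
      using Xh_pd_cellwise_continuous[OF v S(1)] by blast
    then have "continuous_on A (\<lambda>x. pd v l j x)"
      using S(2) by (auto intro: continuous_on_eq[OF continuous_on_subset])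
    then show "(\<lambda>x. pd v l j x) measurable_on A"
      using continuous_imp_measurable_on_sets_lebesgue[OF _ A] measurable_on_iff_borel_measurable[OF A]
      by blast
  qed
  moreover have "finite U" using tri unfolding U_def conforming_triangulation_def by blast
  ultimately have "(\<lambda>x. pd v l j x) measurable_on \<Union>U"
    by (intro measurable_on_Union_lebesgue)
  moreover have "(\<Union>U - \<Omega>) \<union> (\<Omega> - \<Union>U) \<subseteq> skeleton T"
    using conforming_triangulation_interior_cell[OF tri] unfolding U_def by blast
  ultimately show ?thesis
    using negligible_skeleton[OF tri] by (blast intro: measurable_on_spike_set negligible_subset)
qed

lemma Xh_pd_bounded_off_skeleton:
  assumes tri: "conforming_triangulation T \<Omega>" and v: "v \<in> Xh T \<Omega> k"
  shows "\<exists>B. \<forall>x\<in>\<Omega> - skeleton T. \<bar>pd v l j x\<bar> \<le> B"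
proof -
  have "\<forall>S\<in>T. \<exists>c. continuous_on UNIV c \<and> (\<forall>x\<in>interior S. pd v l j x = c x)"
    using Xh_pd_cellwise_continuous[OF v] by blast
  then obtain c where c: "\<And>S. S \<in> T \<Longrightarrow> continuous_on UNIV (c S)"
    "\<And>S x. S \<in> T \<Longrightarrow> x \<in> interior S \<Longrightarrow> pd v l j x = c S x"
    using bchoice by metis
  have "bounded (c S ` S)" if "S \<in> T" for S
    using that tri c(1) unfolding conforming_triangulation_def
    by (meson compact_continuous_image compact_imp_bounded compact_simplex continuous_on_subset subset_UNIV)
  then have "bounded (\<Union>S\<in>T. c S ` S)"
    using tri unfolding conforming_triangulation_def by blast
  then obtain B where B: "\<And>S x. S \<in> T \<Longrightarrow> x \<in> S \<Longrightarrow> \<bar>c S x\<bar> \<le> B"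
    unfolding bounded_iff by fastforce
  have "\<bar>pd v l j x\<bar> \<le> B" if "x \<in> \<Omega> - skeleton T" for x
    using conforming_triangulation_interior_cell[OF tri] that c(2) B interior_subset by fastforce
  then show ?thesis by blast
qed

lemma Xh_pd_bounded_measurable_off_skeleton:
  assumes "conforming_triangulation T \<Omega>" "\<Omega> \<in> sets lebesgue" "v \<in> Xh T \<Omega> k"
  shows "bounded_measurable_off (skeleton T) \<Omega> (\<lambda>x. pd v l j x)"
  unfolding bounded_measurable_off_def
  using Xh_pd_measurable_on[OF assms] Xh_pd_bounded_off_skeleton[OF assms(1,3)] by blast

lemma set_integrable_divg_mult:
  assumes "conforming_triangulation T \<Omega>" "\<Omega> \<in> lmeasurable" "v \<in> Xh T \<Omega> k" "w \<in> Xh T \<Omega> k"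
  shows "set_integrable lebesgue \<Omega> (\<lambda>x. divg v x * divg w x)"
  using assms unfolding divg_def
  by (intro set_integrable_bounded_measurable_off[where N = "skeleton T"] negligible_skeleton bounded_measurable_off_mult
      bounded_measurable_off_sum Xh_pd_bounded_measurable_off_skeleton) (auto simp: fmeasurableD)

lemma set_integrable_grad_inner:
  assumes "conforming_triangulation T \<Omega>" "\<Omega> \<in> lmeasurable" "v \<in> Xh T \<Omega> k" "w \<in> Xh T \<Omega> k"
  shows "set_integrable lebesgue \<Omega> (\<lambda>x. \<Sum>j\<in>UNIV. \<Sum>l\<in>UNIV. pd v l j x * pd w l j x)"
  using assms
  by (intro set_integrable_bounded_measurable_off[where N = "skeleton T"] negligible_skeleton bounded_measurable_off_mult
      bounded_measurable_off_sum Xh_pd_bounded_measurable_off_skeleton) (auto simp: fmeasurableD)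

lemma l2_ip_divg_lincomb_left:
  assumes tri: "conforming_triangulation T \<Omega>" and \<Omega>: "\<Omega> \<in> lmeasurable"
    and X: "v \<in> Xh T \<Omega> k" "w \<in> Xh T \<Omega> k" "z \<in> Xh T \<Omega> k"
  shows "l2_ip \<Omega> (divg (\<lambda>x. a *\<^sub>R v x + b *\<^sub>R w x)) (divg z)
       = a * l2_ip \<Omega> (divg v) (divg z) + b * l2_ip \<Omega> (divg w) (divg z)"
  unfolding l2_ip_def
proof (rule set_lebesgue_integral_lincomb_off_negligible[OF negligible_skeleton[OF tri]])
  show "set_integrable lebesgue \<Omega> (\<lambda>x. divg v x * divg z x)"
    and "set_integrable lebesgue \<Omega> (\<lambda>x. divg w x * divg z x)"
    using X by (auto intro: set_integrable_divg_mult[OF tri \<Omega>])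
  fix x assume "x \<in> \<Omega> - skeleton T"
  then show "divg (\<lambda>x. a *\<^sub>R v x + b *\<^sub>R w x) x * divg z x
      = a * (divg v x * divg z x) + b * (divg w x * divg z x)"
    using X Xh_differentiable_off_skeleton[OF tri]
    by (simp add: divg_lincomb algebra_simps)
qed

lemma grad_ip_lincomb_left:
  assumes tri: "conforming_triangulation T \<Omega>" and \<Omega>: "\<Omega> \<in> lmeasurable"
    and X: "v \<in> Xh T \<Omega> k" "w \<in> Xh T \<Omega> k" "z \<in> Xh T \<Omega> k"
  shows "grad_ip \<Omega> (\<lambda>x. a *\<^sub>R v x + b *\<^sub>R w x) z = a * grad_ip \<Omega> v z + b * grad_ip \<Omega> w z"
  unfolding grad_ip_def
proof (rule set_lebesgue_integral_lincomb_off_negligible[OF negligible_skeleton[OF tri]])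
  show "set_integrable lebesgue \<Omega> (\<lambda>x. \<Sum>j\<in>UNIV. \<Sum>l\<in>UNIV. pd v l j x * pd z l j x)"
    and "set_integrable lebesgue \<Omega> (\<lambda>x. \<Sum>j\<in>UNIV. \<Sum>l\<in>UNIV. pd w l j x * pd z l j x)"
    using X by (auto intro: set_integrable_grad_inner[OF tri \<Omega>])
  fix x assume "x \<in> \<Omega> - skeleton T"
  then show "(\<Sum>j\<in>UNIV. \<Sum>l\<in>UNIV. pd (\<lambda>x. a *\<^sub>R v x + b *\<^sub>R w x) l j x * pd z l j x)
      = a * (\<Sum>j\<in>UNIV. \<Sum>l\<in>UNIV. pd v l j x * pd z l j x)
        + b * (\<Sum>j\<in>UNIV. \<Sum>l\<in>UNIV. pd w l j x * pd z l j x)"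
    using X Xh_differentiable_off_skeleton[OF tri]
    by (simp add: pd_lincomb sum_distrib_left sum.distrib algebra_simps)
qed

lemma l2_ip_self_nonneg: "0 \<le> l2_ip \<Omega> a a"
  unfolding l2_ip_def set_lebesgue_integral_def by (intro Bochner_Integration.integral_nonneg) (simp add: indicator_def)

lemma grad_ip_self_nonneg: "0 \<le> grad_ip \<Omega> v v"
  unfolding grad_ip_def set_lebesgue_integral_def
  by (intro Bochner_Integration.integral_nonneg) (simp add: indicator_def sum_nonneg)

lemma l2_norm_eq_sqrt_l2_ip: "l2_norm \<Omega> a = sqrt (l2_ip \<Omega> a a)"
  by (simp add: l2_norm_def l2_ip_def power2_eq_square)

lemma ipm_multiplier_Xh:
  fixes u \<phi> :: "nat \<Rightarrow> real^'d \<Rightarrow> real^'d"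
  assumes "\<phi> 0 = (\<lambda>x. 0)" "\<forall>j\<ge>1. \<phi> j = (\<lambda>x. \<phi> (j - 1) x - \<rho> *\<^sub>R u j x)"
    and "\<And>j. j \<ge> 1 \<Longrightarrow> u j \<in> Xh T \<Omega> k"
  shows "\<phi> j \<in> Xh T \<Omega> k"
proof (induction j)
  case 0
  then show ?case using assms(1) Xh_zero by simp
next
  case (Suc j)
  then show ?case
    using assms(2) Xh_lincomb[OF Suc assms(3), of "Suc j" 1 "-\<rho>"] by simp
qed

lemma ipm_increment_energy_identity:
  assumes tri: "conforming_triangulation T \<Omega>" and \<Omega>: "\<Omega> \<in> lmeasurable"
    and X: "a \<in> Xh T \<Omega> k" "b \<in> Xh T \<Omega> k" "q \<in> Xh T \<Omega> k"
    and e: "e = (\<lambda>x. a x - b x)"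
    and eq_a: "\<nu> * grad_ip \<Omega> a e + \<rho> * l2_ip \<Omega> (divg a) (divg e)
               = F + l2_ip \<Omega> (divg (\<lambda>x. q x - \<rho> *\<^sub>R b x)) (divg e)"
    and eq_b: "\<nu> * grad_ip \<Omega> b e + \<rho> * l2_ip \<Omega> (divg b) (divg e) = F + l2_ip \<Omega> (divg q) (divg e)"
  shows "\<nu> * grad_ip \<Omega> e e + \<rho> * l2_ip \<Omega> (divg a) (divg e) = 0"
proof -
  have e_lincomb: "e = (\<lambda>x. 1 *\<^sub>R a x + (-1) *\<^sub>R b x)" using e by simp
  have eX: "e \<in> Xh T \<Omega> k" unfolding e_lincomb using X(1,2) by (rule Xh_lincomb)
  have "grad_ip \<Omega> e e = grad_ip \<Omega> a e - grad_ip \<Omega> b e"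
    using grad_ip_lincomb_left[OF tri \<Omega> X(1,2) eX, of 1 "-1", folded e_lincomb] by simp
  then have "\<nu> * grad_ip \<Omega> e e = \<nu> * grad_ip \<Omega> a e - \<nu> * grad_ip \<Omega> b e"
    by (simp add: right_diff_distrib)
  moreover have "l2_ip \<Omega> (divg (\<lambda>x. q x - \<rho> *\<^sub>R b x)) (divg e)
      = l2_ip \<Omega> (divg q) (divg e) - \<rho> * l2_ip \<Omega> (divg b) (divg e)"
    using l2_ip_divg_lincomb_left[OF tri \<Omega> X(3,2) eX, of 1 "-\<rho>"] by simp
  ultimately show ?thesis using eq_a eq_b by linarith
qed

lemma l2_norm_divg_le_of_energy_identity:
  assumes tri: "conforming_triangulation T \<Omega>" and \<Omega>: "\<Omega> \<in> lmeasurable"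
    and X: "a \<in> Xh T \<Omega> k" "b \<in> Xh T \<Omega> k"
    and e: "e = (\<lambda>x. a x - b x)"
    and \<nu>: "0 \<le> \<nu>" and \<rho>: "0 < \<rho>"
    and energy: "\<nu> * grad_ip \<Omega> e e + \<rho> * l2_ip \<Omega> (divg a) (divg e) = 0"
  shows "l2_norm \<Omega> (divg a) \<le> l2_norm \<Omega> (divg b)"
proof -
  have e_lincomb: "e = (\<lambda>x. 1 *\<^sub>R a x + (-1) *\<^sub>R b x)" using e by simp
  have eX: "e \<in> Xh T \<Omega> k" unfolding e_lincomb using X(1,2) by (rule Xh_lincomb)
  have commute: "l2_ip \<Omega> p q = l2_ip \<Omega> q p" for p q
    unfolding l2_ip_def by (simp add: mult.commute)
  have expand: "l2_ip \<Omega> (divg e) (divg z) = l2_ip \<Omega> (divg a) (divg z) - l2_ip \<Omega> (divg b) (divg z)"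
    if "z \<in> Xh T \<Omega> k" for z
    using l2_ip_divg_lincomb_left[OF tri \<Omega> X that, of 1 "-1", folded e_lincomb] by simp
  have "0 \<le> \<nu> * grad_ip \<Omega> e e" using \<nu> grad_ip_self_nonneg by (rule mult_nonneg_nonneg)
  then have "\<rho> * l2_ip \<Omega> (divg a) (divg e) \<le> 0" using energy by linarith
  then have "l2_ip \<Omega> (divg a) (divg e) \<le> 0" using \<rho> by (simp add: mult_le_0_iff)
  moreover have "l2_ip \<Omega> (divg a) (divg e) = l2_ip \<Omega> (divg a) (divg a) - l2_ip \<Omega> (divg a) (divg b)"
    using expand[OF X(1)] expand[OF X(2)] commute[of "divg a" "divg e"] commute[of "divg b" "divg a"]
    by simp
  moreover have "l2_ip \<Omega> (divg e) (divg e)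
      = l2_ip \<Omega> (divg a) (divg a) - 2 * l2_ip \<Omega> (divg a) (divg b) + l2_ip \<Omega> (divg b) (divg b)"
    using expand[OF eX] expand[OF X(1)] expand[OF X(2)] commute[of "divg a" "divg e"]
      commute[of "divg b" "divg e"] commute[of "divg b" "divg a"]
    by simp
  ultimately have "l2_ip \<Omega> (divg a) (divg a) \<le> l2_ip \<Omega> (divg b) (divg b)"
    using l2_ip_self_nonneg[of \<Omega> "divg e"] by linarith
  then show ?thesis
    unfolding l2_norm_eq_sqrt_l2_ip by simp
qed

theorem mainTheorem9:
  fixes \<Omega> :: "(real^'d) set" and T :: "(real^'d) set set" and k :: nat
    and \<nu> \<rho> :: real and f :: "(real^'d \<Rightarrow> real^'d) \<Rightarrow> real" and g :: "real^'d \<Rightarrow> real^'d"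
    and u \<phi> :: "nat \<Rightarrow> real^'d \<Rightarrow> real^'d" and i :: nat
  assumes dim: "CARD('d) \<ge> 2"
    and dom: "lipschitz_domain \<Omega>" "polyhedral_domain \<Omega>"
    and tri: "conforming_triangulation T \<Omega>"
    and SV: "div_compatible T \<Omega> k"
    and nu: "\<nu> > 0" and rho: "\<rho> > 0"
    and f_lin: "\<forall>v\<in>Vh T \<Omega> k. \<forall>w\<in>Vh T \<Omega> k. \<forall>a b::real.
                  f (\<lambda>x. a *\<^sub>R v x + b *\<^sub>R w x) = a * f v + b * f w"
    and g: "g \<in> Xh_tilde T \<Omega> k"
    and phi0: "\<phi> 0 = (\<lambda>x. 0)"
    and u_step: "\<forall>j\<ge>1. u j \<in> Xh_tilde T \<Omega> k \<and> (\<forall>x\<in>frontier \<Omega>. u j x = g x) \<and>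
                   (\<forall>v\<in>Vh T \<Omega> k. \<nu> * grad_ip \<Omega> (u j) v + \<rho> * l2_ip \<Omega> (divg (u j)) (divg v)
                        = f v + l2_ip \<Omega> (divg (\<phi> (j - 1))) (divg v))"
    and phi_step: "\<forall>j\<ge>1. \<phi> j = (\<lambda>x. \<phi> (j - 1) x - \<rho> *\<^sub>R u j x)"
    and i: "i \<ge> 2"
  shows "l2_norm \<Omega> (divg (u i)) \<le> l2_norm \<Omega> (divg (u (i - 1)))"
proof -
  have \<Omega>: "\<Omega> \<in> lmeasurable"
    using dom(1) unfolding lipschitz_domain_def by (blast intro: lmeasurable_open)
  have uX: "u j \<in> Xh T \<Omega> k" if "j \<ge> 1" for j
    using u_step that unfolding Xh_tilde_def by blast
  define e where "e = (\<lambda>x. u i x - u (i - 1) x)"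
  have "e \<in> Vh T \<Omega> k"
    using Xh_lincomb[OF uX uX, of i "i - 1" 1 "-1"] u_step i unfolding Vh_def e_def by auto
  then have step: "\<nu> * grad_ip \<Omega> (u j) e + \<rho> * l2_ip \<Omega> (divg (u j)) (divg e)
        = f e + l2_ip \<Omega> (divg (\<phi> (j - 1))) (divg e)" if "j \<ge> 1" for j
    using u_step that by blast
  have "\<phi> (i - 1) = (\<lambda>x. \<phi> (i - 2) x - \<rho> *\<^sub>R u (i - 1) x)"
    using phi_step[rule_format, of "i - 1"] i by (simp add: numeral_2_eq_2)
  with step[of i] step[of "i - 1"] i
  have "\<nu> * grad_ip \<Omega> (u i) e + \<rho> * l2_ip \<Omega> (divg (u i)) (divg e)
        = f e + l2_ip \<Omega> (divg (\<lambda>x. \<phi> (i - 2) x - \<rho> *\<^sub>R u (i - 1) x)) (divg e)"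
    and "\<nu> * grad_ip \<Omega> (u (i - 1)) e + \<rho> * l2_ip \<Omega> (divg (u (i - 1))) (divg e)
        = f e + l2_ip \<Omega> (divg (\<phi> (i - 2))) (divg e)"
    by (simp_all add: numeral_2_eq_2)
  then have "\<nu> * grad_ip \<Omega> e e + \<rho> * l2_ip \<Omega> (divg (u i)) (divg e) = 0"
    using ipm_increment_energy_identity[OF tri \<Omega> uX uX ipm_multiplier_Xh[OF phi0 phi_step uX] e_def]
      i by simp
  then show ?thesis
    using i by (intro l2_norm_divg_le_of_energy_identity[OF tri \<Omega> uX uX e_def less_imp_le[OF nu] rho]) auto
qed

end
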